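(* If the bivariate random vector $(X,Y)$ is exchangeable, i.e. $(X,Y)\overset{d}{=}(Y,X)$, then $$|\max(X,-Y)|\overset{d}{=}|\min(X,-Y)|\overset{d}{=}|X|\overset{d}{=}|Y|.$$
   Context: $\overset{d}{=}$ denotes equality in distribution. *)

theory Defs
  imports "HOL-Probability.Probability"
begin

end

theory Submission
  imports Defs
begin

text \<open>Exchangeability of (X, Y) makes g(X, Y) and g(Y, X) equidistributed for every Borel g.
  With g(x, y) = |max x (-y)| this gives |max(X,-Y)| = |min(X,-Y)| in distribution, and with
  g(x, y) = |x| it gives |X| = |Y|. Moreover, pointwise the pair {|max(X,-Y)|, |min(X,-Y)|} is
  {|X|, |Y|}, so for every Borel set the probabilities of the first two events add up to those
  of the last two; as the summands within each pair coincide, |min(X,-Y)| = |X| in distribution.\<close>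

lemma distr_swap_eq_if_exchangeable:
  fixes X Y :: "'a \<Rightarrow> 'b"
  assumes X: "X \<in> measurable M N" and Y: "Y \<in> measurable M N"
    and exch: "distr M (N \<Otimes>\<^sub>M N) (\<lambda>\<omega>. (X \<omega>, Y \<omega>)) = distr M (N \<Otimes>\<^sub>M N) (\<lambda>\<omega>. (Y \<omega>, X \<omega>))"
    and g: "g \<in> measurable (N \<Otimes>\<^sub>M N) K"
  shows "distr M K (\<lambda>\<omega>. g (X \<omega>, Y \<omega>)) = distr M K (\<lambda>\<omega>. g (Y \<omega>, X \<omega>))"
proof -
  have XY: "(\<lambda>\<omega>. (X \<omega>, Y \<omega>)) \<in> measurable M (N \<Otimes>\<^sub>M N)"
    and YX: "(\<lambda>\<omega>. (Y \<omega>, X \<omega>)) \<in> measurable M (N \<Otimes>\<^sub>M N)"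
    using X Y by measurable
  have "distr M K (\<lambda>\<omega>. g (X \<omega>, Y \<omega>)) = distr (distr M (N \<Otimes>\<^sub>M N) (\<lambda>\<omega>. (X \<omega>, Y \<omega>))) K g"
    using distr_distr[OF g XY] by (simp add: comp_def)
  also have "\<dots> = distr (distr M (N \<Otimes>\<^sub>M N) (\<lambda>\<omega>. (Y \<omega>, X \<omega>))) K g"
    using exch by simp
  also have "\<dots> = distr M K (\<lambda>\<omega>. g (Y \<omega>, X \<omega>))"
    using distr_distr[OF g YX] by (simp add: comp_def)
  finally show ?thesis .
qed

text \<open>Equality of two-element sets forces equality of the pairs up to order, so the preimages of
  any set under f1, f2 have the same union and intersection as those under g1, g2. No finiteness
  of the measure is needed: the cancellation 2a = 2b \<Longrightarrow> a = b holds in the extended non-negative reals.\<close>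

lemma distr_eq_if_pointwise_same_pair:
  assumes f1: "f1 \<in> measurable M N" and f2: "f2 \<in> measurable M N"
    and g1: "g1 \<in> measurable M N" and g2: "g2 \<in> measurable M N"
    and same_pair: "\<And>\<omega>. \<omega> \<in> space M \<Longrightarrow> {f1 \<omega>, f2 \<omega>} = {g1 \<omega>, g2 \<omega>}"
    and f_eq: "distr M N f1 = distr M N f2" and g_eq: "distr M N g1 = distr M N g2"
  shows "distr M N f1 = distr M N g1"
proof (rule measure_eqI)
  fix B assume "B \<in> sets (distr M N f1)"
  then have B: "B \<in> sets N" by simp
  let ?pre = "\<lambda>h. h -` B \<inter> space M"
  have sets: "?pre f1 \<in> sets M" "?pre f2 \<in> sets M" "?pre g1 \<in> sets M" "?pre g2 \<in> sets M"
    using f1 f2 g1 g2 B by (auto intro: measurable_sets)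
  have swap_or_same: "(f1 \<omega> = g1 \<omega> \<and> f2 \<omega> = g2 \<omega>) \<or> (f1 \<omega> = g2 \<omega> \<and> f2 \<omega> = g1 \<omega>)"
    if "\<omega> \<in> space M" for \<omega>
    using same_pair[OF that] by (simp add: doubleton_eq_iff)
  have un: "?pre f1 \<union> ?pre f2 = ?pre g1 \<union> ?pre g2"
    and int: "?pre f1 \<inter> ?pre f2 = ?pre g1 \<inter> ?pre g2"
    by (intro set_eqI; use swap_or_same in force)+
  have emeasure_distr_eq: "emeasure M (?pre h) = emeasure M (?pre h')"
    if "distr M N h = distr M N h'" "h \<in> measurable M N" "h' \<in> measurable M N" for h h'
    using arg_cong[OF that(1), of "\<lambda>\<mu>. emeasure \<mu> B"] that(2,3) B by (simp add: emeasure_distr)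
  have "2 * emeasure M (?pre f1) = emeasure M (?pre f1) + emeasure M (?pre f2)"
    using emeasure_distr_eq[OF f_eq f1 f2] by (simp add: mult_2)
  also have "\<dots> = emeasure M (?pre g1) + emeasure M (?pre g2)"
    using emeasure_Un_Int[OF sets(1,2)] emeasure_Un_Int[OF sets(3,4)] un int by simp
  also have "\<dots> = 2 * emeasure M (?pre g1)"
    using emeasure_distr_eq[OF g_eq g1 g2] by (simp add: mult_2)
  finally have "emeasure M (?pre f1) = emeasure M (?pre g1)"
    by (simp add: ennreal_mult_cancel_left)
  then show "emeasure (distr M N f1) B = emeasure (distr M N g1) B"
    using f1 g1 B by (simp add: emeasure_distr)
qed simp

theorem corollary2p13:
  fixes M :: "'a measure" and X Y :: "'a \<Rightarrow> real"
  assumes "prob_space M"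
    and "X \<in> borel_measurable M" and "Y \<in> borel_measurable M"
    and exch: "distr M (borel \<Otimes>\<^sub>M borel) (\<lambda>\<omega>. (X \<omega>, Y \<omega>))
             = distr M (borel \<Otimes>\<^sub>M borel) (\<lambda>\<omega>. (Y \<omega>, X \<omega>))"
  shows "distr M borel (\<lambda>\<omega>. \<bar>max (X \<omega>) (- Y \<omega>)\<bar>) = distr M borel (\<lambda>\<omega>. \<bar>min (X \<omega>) (- Y \<omega>)\<bar>)
       \<and> distr M borel (\<lambda>\<omega>. \<bar>min (X \<omega>) (- Y \<omega>)\<bar>) = distr M borel (\<lambda>\<omega>. \<bar>X \<omega>\<bar>)
       \<and> distr M borel (\<lambda>\<omega>. \<bar>X \<omega>\<bar>) = distr M borel (\<lambda>\<omega>. \<bar>Y \<omega>\<bar>)"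
proof -
  note swap = distr_swap_eq_if_exchangeable[OF assms(2,3) exch]
  have "distr M borel (\<lambda>\<omega>. \<bar>max (X \<omega>) (- Y \<omega>)\<bar>) = distr M borel (\<lambda>\<omega>. \<bar>max (Y \<omega>) (- X \<omega>)\<bar>)"
    using swap[of "\<lambda>p. \<bar>max (fst p) (- snd p)\<bar>"] by simp
  moreover have "\<bar>max y (- x)\<bar> = \<bar>min x (- y)\<bar>" for x y :: real
    by (simp add: max_def min_def)
  ultimately have max_min: "distr M borel (\<lambda>\<omega>. \<bar>max (X \<omega>) (- Y \<omega>)\<bar>) = distr M borel (\<lambda>\<omega>. \<bar>min (X \<omega>) (- Y \<omega>)\<bar>)"
    by simp
  have abs_X_Y: "distr M borel (\<lambda>\<omega>. \<bar>X \<omega>\<bar>) = distr M borel (\<lambda>\<omega>. \<bar>Y \<omega>\<bar>)"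
    using swap[of "\<lambda>p. \<bar>fst p\<bar>"] by simp
  have "distr M borel (\<lambda>\<omega>. \<bar>min (X \<omega>) (- Y \<omega>)\<bar>) = distr M borel (\<lambda>\<omega>. \<bar>X \<omega>\<bar>)"
  proof (rule distr_eq_if_pointwise_same_pair[OF _ _ _ _ _ max_min[symmetric] abs_X_Y])
    show "{\<bar>min (X \<omega>) (- Y \<omega>)\<bar>, \<bar>max (X \<omega>) (- Y \<omega>)\<bar>} = {\<bar>X \<omega>\<bar>, \<bar>Y \<omega>\<bar>}" for \<omega>
      by (auto simp: min_def max_def)
  qed (use assms(2,3) in measurable)
  with max_min abs_X_Y show ?thesis by simp
qed

end
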